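(* $w^\ast(2,3)=17$. That is, every 2-coloring of $\{1,\dots,17\}$ contains a monochromatic double 3-term arithmetic progression, while the 2-coloring of $\{1,\dots,16\}$ given by the word $0010110100101101$ (the $n$-th letter being the color of $n$) contains no monochromatic double 3-term arithmetic progression.
   Context: An increasing sequence of positive integers $a_1<a_2<\cdots$ (finite or infinite) contains a double 3-term arithmetic progression if there are indices $i<j<k$ with $i+k=2j$ and $a_i+a_k=2a_j$. For a coloring of an interval, each color class is regarded as an increasing sequence by listing its elements in increasing order; a monochromatic double 3-term arithmetic progression is a double 3-term arithmetic progression in some color class. For integers $r,k$, $w^\ast(r,k)$ denotes the least integer $N$, if it exists, such that every $r$-coloring of $\{1,\dots,N\}$ has a monochromatic double $k$-term arithmetic progression (defined analogously with $k$ indices in arithmetic progression whose values are also in arithmetic progression). *)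

theory Defs
  imports Main
begin

(* A (finite) increasing sequence is represented by the list of its terms,
   indexed from 0. It contains a double k-term AP if there are indices
   i, i+d, ..., i+(k-1)d (d > 0) within range whose values form an AP. *)
definition has_double_ap :: "nat \<Rightarrow> nat list \<Rightarrow> bool" where
  "has_double_ap k xs \<longleftrightarrow>
     (\<exists>i d. d > 0 \<and> i + (k - 1) * d < length xs \<and>
        (\<forall>t<k. int (xs ! (i + t * d)) = int (xs ! i) + int t * (int (xs ! (i + d)) - int (xs ! i))))"

definition has_double_ap3 :: "nat list \<Rightarrow> bool" where
  "has_double_ap3 xs \<longleftrightarrow>
     (\<exists>i j k. i < j \<and> j < k \<and> k < length xs \<and> i + k = 2 * j \<and>
        xs ! i + xs ! k = 2 * xs ! j)"

definition color_class :: "(nat \<Rightarrow> 'c) \<Rightarrow> nat \<Rightarrow> 'c \<Rightarrow> nat list" where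
  "color_class f N c = sorted_list_of_set {n \<in> {1..N}. f n = c}"

definition mono_double_ap :: "nat \<Rightarrow> (nat \<Rightarrow> 'c) \<Rightarrow> nat \<Rightarrow> bool" where
  "mono_double_ap k f N \<longleftrightarrow> (\<exists>c. has_double_ap k (color_class f N c))"

definition mono_double_ap3 :: "(nat \<Rightarrow> 'c) \<Rightarrow> nat \<Rightarrow> bool" where
  "mono_double_ap3 f N \<longleftrightarrow> (\<exists>c. has_double_ap3 (color_class f N c))"

(* r-colorings of {1..N}: maps into {0..<r} (values outside {1..N} irrelevant) *)
definition w_star :: "nat \<Rightarrow> nat \<Rightarrow> nat" where
  "w_star r k = (LEAST N. \<forall>f :: nat \<Rightarrow> nat. (\<forall>n\<in>{1..N}. f n < r) \<longrightarrow> mono_double_ap k f N)"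

definition word16 :: "nat list" where
  "word16 = [0,0,1,0,1,1,0,1,0,0,1,0,1,1,0,1]"

definition word_coloring :: "nat \<Rightarrow> nat" where
  "word_coloring n = word16 ! (n - 1)"

end

theory Submission
  imports Defs
begin

text \<open>A double 3-term AP in a colour class is detected at its last term: the class
  positions p_0 < ... < p_(k-1) together with a new position n contain one ending in n iff
  p_(2j-k) + n = 2 p_j for some j. A depth-first search over 0/1-words that extends a word
  letter by letter and abandons a branch as soon as the new letter completes such a
  progression closes every branch within 17 letters, which proves the upper bound by
  evaluation. Since the property is inherited by longer prefixes, the word 0010110100101101
  (checked by evaluation) also witnesses all smaller lower bounds.\<close>

lemma color_class_conv_filter [code]:
  "color_class f N c = filter (\<lambda>n. f n = c) [1..<Suc N]"
proof -
  let ?xs = "filter (\<lambda>n. f n = c) [1..<Suc N]"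
  have set_eq: "{n \<in> {1..N}. f n = c} = set ?xs"
    by auto
  have "sorted ?xs" "distinct ?xs"
    by (auto intro: sorted_wrt_filter simp del: upt_Suc)
  then show ?thesis
    unfolding color_class_def set_eq by (rule sorted_list_of_set.idem_if_sorted_distinct)
qed

lemma color_class_cong:
  assumes "\<And>n. n \<in> {1..N} \<Longrightarrow> f n = g n"
  shows "color_class f N c = color_class g N c"
  unfolding color_class_conv_filter using assms by (intro filter_cong) auto

lemma color_class_Suc:
  "color_class f (Suc N) c = color_class f N c @ (if f (Suc N) = c then [Suc N] else [])"
  unfolding color_class_conv_filter by simp

lemma color_class_prefix:
  assumes "N \<le> M"
  shows "\<exists>ys. color_class f M c = color_class f N c @ ys"
  using assms
proof (induction M rule: dec_induct)
  case (step M)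
  then show ?case by (auto simp: color_class_Suc)
qed simp

definition completes_ap3 :: "nat list \<Rightarrow> nat \<Rightarrow> bool" where
  "completes_ap3 xs a \<longleftrightarrow>
     (\<exists>j<length xs. length xs \<le> 2 * j \<and> xs ! (2 * j - length xs) + a = 2 * xs ! j)"

lemma has_double_ap3_iff_completes [code]:
  "has_double_ap3 xs \<longleftrightarrow> (\<exists>k<length xs. completes_ap3 (take k xs) (xs ! k))"
proof
  assume "has_double_ap3 xs"
  then obtain i j k where "i < j" "j < k" "k < length xs" "i + k = 2 * j"
      "xs ! i + xs ! k = 2 * xs ! j"
    unfolding has_double_ap3_def by blast
  moreover have "i = 2 * j - k"
    using \<open>i + k = 2 * j\<close> by simp
  ultimately have "completes_ap3 (take k xs) (xs ! k)"
    unfolding completes_ap3_def by (intro exI[of _ j]) auto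
  with \<open>k < length xs\<close> show "\<exists>k<length xs. completes_ap3 (take k xs) (xs ! k)"
    by blast
next
  assume "\<exists>k<length xs. completes_ap3 (take k xs) (xs ! k)"
  then obtain k j where "k < length xs" "j < k" "k \<le> 2 * j"
      "xs ! (2 * j - k) + xs ! k = 2 * xs ! j"
    unfolding completes_ap3_def by (auto simp: min_def split: if_splits)
  then show "has_double_ap3 xs"
    unfolding has_double_ap3_def by (intro exI[of _ "2 * j - k"] exI[of _ j] exI[of _ k]) auto
qed

lemma has_double_ap3_append:
  "has_double_ap3 xs \<Longrightarrow> has_double_ap3 (xs @ ys)"
proof -
  assume "has_double_ap3 xs"
  then obtain i j k where "i < j" "j < k" "k < length xs" "i + k = 2 * j"
      "xs ! i + xs ! k = 2 * xs ! j"
    unfolding has_double_ap3_def by blast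
  then show ?thesis
    unfolding has_double_ap3_def by (intro exI[of _ i] exI[of _ j] exI[of _ k]) (simp add: nth_append)
qed

lemma has_double_ap3_snoc:
  "completes_ap3 xs a \<Longrightarrow> has_double_ap3 (xs @ [a])"
  unfolding has_double_ap3_iff_completes by (intro exI[of _ "length xs"]) simp

lemma mono_double_ap3_mono:
  assumes "mono_double_ap3 f N" "N \<le> M"
  shows "mono_double_ap3 f M"
  using assms color_class_prefix has_double_ap3_append
  unfolding mono_double_ap3_def by metis

lemma mono_double_ap3_cong:
  assumes "\<And>n. n \<in> {1..N} \<Longrightarrow> f n = g n"
  shows "mono_double_ap3 f N \<longleftrightarrow> mono_double_ap3 g N"
  unfolding mono_double_ap3_def using color_class_cong[OF assms] by simp

lemma mono_double_ap3_iff_attained_colors: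
  "mono_double_ap3 f N \<longleftrightarrow> (\<exists>c\<in>f ` {1..N}. has_double_ap3 (color_class f N c))"
proof -
  have "c \<in> f ` {1..N}" if "has_double_ap3 (color_class f N c)" for c
  proof -
    from that have "color_class f N c \<noteq> []"
      unfolding has_double_ap3_def by auto
    then show ?thesis
      unfolding color_class_conv_filter by (auto simp: filter_empty_conv)
  qed
  then show ?thesis
    unfolding mono_double_ap3_def by blast
qed

lemma three_term_ap_iff:
  fixes a :: "nat \<Rightarrow> nat"
  shows "(\<forall>t<3. int (a t) = int (a 0) + int t * (int (a 1) - int (a 0))) \<longleftrightarrow> a 0 + a 2 = 2 * a 1"
proof -
  have "(\<forall>t<3. int (a t) = int (a 0) + int t * (int (a 1) - int (a 0))) \<longleftrightarrow>
      int (a 2) = int (a 0) + 2 * (int (a 1) - int (a 0))"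
    by (auto simp: numeral_3_eq_3 less_Suc_eq numeral_2_eq_2)
  also have "\<dots> \<longleftrightarrow> a 0 + a 2 = 2 * a 1"
    by presburger
  finally show ?thesis .
qed

lemma has_double_ap_3_iff: "has_double_ap 3 xs \<longleftrightarrow> has_double_ap3 xs"
proof
  assume "has_double_ap 3 xs"
  then obtain i d where "0 < d" "i + 2 * d < length xs" "xs ! i + xs ! (i + 2 * d) = 2 * xs ! (i + d)"
    unfolding has_double_ap_def using three_term_ap_iff[of "\<lambda>t. xs ! (i + t * d)" for i d] by auto
  then show "has_double_ap3 xs"
    unfolding has_double_ap3_def by (intro exI[of _ i] exI[of _ "i + d"] exI[of _ "i + 2 * d"]) simp
next
  assume "has_double_ap3 xs"
  then obtain i j k where "i < j" "j < k" "k < length xs" "i + k = 2 * j" "xs ! i + xs ! k = 2 * xs ! j"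
    unfolding has_double_ap3_def by blast
  moreover obtain d where "j = i + d" "0 < d"
    using \<open>i < j\<close> less_imp_add_positive by blast
  moreover have "k = i + 2 * d"
    using \<open>i + k = 2 * j\<close> \<open>j = i + d\<close> by simp
  ultimately show "has_double_ap 3 xs"
    unfolding has_double_ap_def using three_term_ap_iff[of "\<lambda>t. xs ! (i + t * d)"]
    by (intro exI[of _ i] exI[of _ d]) simp
qed

lemma mono_double_ap_3_iff: "mono_double_ap 3 f N \<longleftrightarrow> mono_double_ap3 f N"
  unfolding mono_double_ap_def mono_double_ap3_def has_double_ap_3_iff ..

definition word_col :: "nat list \<Rightarrow> nat \<Rightarrow> nat" where
  "word_col w n = w ! (n - 1)"

lemma word_col_append:
  "n \<in> {1..length w} \<Longrightarrow> word_col (w @ v) n = word_col w n"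
  unfolding word_col_def by (auto simp: nth_append)

lemma color_class_word_snoc:
  "color_class (word_col (w @ [c])) (Suc (length w)) d =
     color_class (word_col w) (length w) d @ (if c = d then [Suc (length w)] else [])"
proof -
  have "color_class (word_col (w @ [c])) (length w) d = color_class (word_col w) (length w) d"
    by (rule color_class_cong) (rule word_col_append)
  moreover have "word_col (w @ [c]) (Suc (length w)) = c"
    by (simp add: word_col_def)
  ultimately show ?thesis
    by (simp add: color_class_Suc)
qed

fun forces_mono_ap3 :: "nat \<Rightarrow> nat \<Rightarrow> nat list \<Rightarrow> nat list \<Rightarrow> bool" where
  "forces_mono_ap3 0 n P Q = False"
| "forces_mono_ap3 (Suc m) n P Q =
     ((if completes_ap3 P n then True else forces_mono_ap3 m (Suc n) (P @ [n]) Q) \<and>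
      (if completes_ap3 Q n then True else forces_mono_ap3 m (Suc n) P (Q @ [n])))"

lemma forces_mono_ap3_sound:
  assumes "forces_mono_ap3 m (Suc (length w))
      (color_class (word_col w) (length w) 0) (color_class (word_col w) (length w) 1)"
    and "length ys = m" "set ys \<subseteq> {0, 1}"
  shows "mono_double_ap3 (word_col (w @ ys)) (length w + m)"
  using assms
proof (induction m arbitrary: w ys)
  case (Suc m)
  then obtain c ys' where ys: "ys = c # ys'" "c \<in> {0, 1}" "length ys' = m" "set ys' \<subseteq> {0, 1}"
    by (cases ys) auto
  let ?w = "w @ [c]"
  have "completes_ap3 (color_class (word_col w) (length w) c) (Suc (length w)) \<or>
      forces_mono_ap3 m (Suc (Suc (length w)))
        (color_class (word_col ?w) (Suc (length w)) 0) (color_class (word_col ?w) (Suc (length w)) 1)"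
    using Suc.prems(1) \<open>c \<in> {0, 1}\<close> by (auto simp: color_class_word_snoc split: if_split_asm)
  then show ?case
  proof
    assume "completes_ap3 (color_class (word_col w) (length w) c) (Suc (length w))"
    then have "has_double_ap3 (color_class (word_col ?w) (length ?w) c)"
      by (simp add: color_class_word_snoc has_double_ap3_snoc)
    moreover have "color_class (word_col (?w @ ys')) (length ?w) c = color_class (word_col ?w) (length ?w) c"
      by (rule color_class_cong) (rule word_col_append)
    ultimately have "mono_double_ap3 (word_col (?w @ ys')) (length ?w)"
      unfolding mono_double_ap3_def by metis
    then show ?thesis
      using ys(1) by (auto intro: mono_double_ap3_mono)
  next
    assume "forces_mono_ap3 m (Suc (Suc (length w)))
        (color_class (word_col ?w) (Suc (length w)) 0) (color_class (word_col ?w) (Suc (length w)) 1)"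
    then show ?thesis
      using Suc.IH[of ?w ys'] ys by simp
  qed
qed simp

lemma forces_mono_ap3_17: "forces_mono_ap3 17 1 [] []"
  by code_simp

lemma two_colorings_17_mono_double_ap3:
  fixes f :: "nat \<Rightarrow> nat"
  assumes "\<forall>n\<in>{1..17}. f n < 2"
  shows "mono_double_ap3 f 17"
proof -
  define w where "w = map f [1..<Suc 17]"
  have "f n \<in> {0, 1}" if "n \<in> {1..17}" for n
  proof -
    have "f n < 2"
      using assms that by blast
    then show ?thesis
      by auto
  qed
  moreover have "set w = f ` {1..17}"
    unfolding w_def by (simp only: set_map set_upt atLeastLessThanSuc_atLeastAtMost)
  ultimately have "set w \<subseteq> {0, 1}"
    by (simp add: image_subset_iff)
  moreover have "forces_mono_ap3 17 (Suc (length []))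
      (color_class (word_col []) (length []) 0) (color_class (word_col []) (length []) 1)"
    using forces_mono_ap3_17 by (simp add: color_class_conv_filter)
  ultimately have "mono_double_ap3 (word_col w) 17"
    using forces_mono_ap3_sound[of 17 "[]" w] by (simp add: w_def)
  moreover have "word_col w n = f n" if "n \<in> {1..17}" for n
    using that by (auto simp: w_def word_col_def simp del: upt_Suc)
  ultimately show ?thesis
    using mono_double_ap3_cong by metis
qed

lemma word_coloring_lt_2: "\<forall>n\<in>{1..16}. word_coloring n < 2"
  unfolding word_coloring_def by code_simp

lemma word_coloring_no_mono_double_ap3: "\<not> mono_double_ap3 word_coloring 16"
  unfolding mono_double_ap3_iff_attained_colors word_coloring_def by code_simp

theorem theorem1:
  shows "w_star 2 3 = 17
    \<and> (\<forall>f :: nat \<Rightarrow> nat. (\<forall>n\<in>{1..17}. f n < 2) \<longrightarrow> mono_double_ap3 f 17)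
    \<and> \<not> mono_double_ap3 word_coloring 16"
proof (intro conjI allI impI word_coloring_no_mono_double_ap3 two_colorings_17_mono_double_ap3)
  show "w_star 2 3 = 17"
    unfolding w_star_def mono_double_ap_3_iff
  proof (rule Least_equality)
    show "\<forall>f :: nat \<Rightarrow> nat. (\<forall>n\<in>{1..17}. f n < 2) \<longrightarrow> mono_double_ap3 f 17"
      using two_colorings_17_mono_double_ap3 by blast
  next
    fix N
    assume N: "\<forall>f :: nat \<Rightarrow> nat. (\<forall>n\<in>{1..N}. f n < 2) \<longrightarrow> mono_double_ap3 f N"
    show "17 \<le> N"
    proof (rule ccontr)
      assume "\<not> 17 \<le> N"
      then have "mono_double_ap3 word_coloring N"
        using N word_coloring_lt_2 by auto
      then have "mono_double_ap3 word_coloring 16"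
        using \<open>\<not> 17 \<le> N\<close> by (auto intro: mono_double_ap3_mono)
      then show False
        using word_coloring_no_mono_double_ap3 by blast
    qed
  qed
qed

end
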